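(* Let $G$ be a connected graph on $n$ vertices $1,2,\ldots,n$ with incidence matrix $M$ and let $M^+$ be the Moore-Penrose inverse of $M$. (a) If $G$ has an odd cycle, then $MM^+=I_n$. (b) If $G$ has no odd cycles (i.e., $G$ is bipartite), then $MM^+=I_n-\frac{1}{n}[(-1)^{d(i,j)}]$, where $[(-1)^{d(i,j)}]$ denotes the $n\times n$ matrix whose $(i,j)$-entry is $(-1)^{d(i,j)}$.
   Context: The incidence matrix $M$ of a graph with vertices $1,\ldots,n$ and edges $e_1,\ldots,e_m$ is the $n\times m$ matrix with $(i,j)$-entry $1$ if vertex $i$ is incident with $e_j$ and $0$ otherwise. $d(i,j)$ is the graph distance. The Moore-Penrose inverse of a real matrix $A$ is the unique $A^+$ with $AA^+A=A$, $A^+AA^+=A^+$, $(AA^+)^T=AA^+$, $(A^+A)^T=A^+A$. *)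

theory Defs
  imports "Jordan_Normal_Form.Matrix"
begin

text \<open>A graph on the vertices 0,...,n-1 (vertex i here is vertex i+1 of the paper)
  given by its list of edges e_1,...,e_m, each edge a 2-element set of vertices.\<close>

definition simple_graph :: "nat \<Rightarrow> nat set list \<Rightarrow> bool" where
  "simple_graph n E \<longleftrightarrow> distinct E \<and>
     (\<forall>e\<in>set E. \<exists>u v. e = {u, v} \<and> u \<noteq> v \<and> u < n \<and> v < n)"

definition adj :: "nat set list \<Rightarrow> nat \<Rightarrow> nat \<Rightarrow> bool" where
  "adj E u v \<longleftrightarrow> u \<noteq> v \<and> {u, v} \<in> set E"

definition walk :: "nat set list \<Rightarrow> nat list \<Rightarrow> bool" where
  "walk E xs \<longleftrightarrow> xs \<noteq> [] \<and> (\<forall>i. Suc i < length xs \<longrightarrow> adj E (xs ! i) (xs ! Suc i))"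

definition graph_connected :: "nat \<Rightarrow> nat set list \<Rightarrow> bool" where
  "graph_connected n E \<longleftrightarrow>
     (\<forall>u<n. \<forall>v<n. \<exists>xs. walk E xs \<and> hd xs = u \<and> last xs = v)"

definition graph_dist :: "nat set list \<Rightarrow> nat \<Rightarrow> nat \<Rightarrow> nat" where
  "graph_dist E u v =
     (LEAST k. \<exists>xs. walk E xs \<and> hd xs = u \<and> last xs = v \<and> length xs = Suc k)"

definition has_odd_cycle :: "nat set list \<Rightarrow> bool" where
  "has_odd_cycle E \<longleftrightarrow> (\<exists>vs. 3 \<le> length vs \<and> odd (length vs) \<and> distinct vs \<and>
      walk E vs \<and> adj E (last vs) (hd vs))"

definition incidence_matrix :: "nat \<Rightarrow> nat set list \<Rightarrow> real mat" where
  "incidence_matrix n E = mat n (length E) (\<lambda>(i, j). if i \<in> E ! j then 1 else 0)"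

definition is_moore_penrose_inverse :: "real mat \<Rightarrow> real mat \<Rightarrow> bool" where
  "is_moore_penrose_inverse A X \<longleftrightarrow> X \<in> carrier_mat (dim_col A) (dim_row A) \<and>
     A * X * A = A \<and> X * A * X = X \<and>
     transpose_mat (A * X) = A * X \<and> transpose_mat (X * A) = X * A"

definition moore_penrose_inverse :: "real mat \<Rightarrow> real mat" where
  "moore_penrose_inverse A = (THE X. is_moore_penrose_inverse A X)"

end

theory Submission
  imports Defs "Jordan_Normal_Form.Determinant"
begin

text \<open>\<open>M M\<^sup>+\<close> is the orthogonal projection onto the column space of \<open>M\<close>, that is \<open>I - J\<close> for the
  orthogonal projection \<open>J\<close> onto \<open>ker M\<^sup>T\<close>; explicitly \<open>M\<^sup>+ = M\<^sup>T (M M\<^sup>T + J)\<inverse>\<close>.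
  A vector \<open>x\<close> lies in \<open>ker M\<^sup>T\<close> iff \<open>x\<^sub>u + x\<^sub>v = 0\<close> for every edge \<open>uv\<close>, so \<open>x\<close> changes sign
  along each step of a walk and, the graph being connected, is determined by a single entry.
  An odd closed walk forces \<open>x = 0\<close>, whence \<open>J = 0\<close>. Without odd cycles all walks between two
  vertices have lengths of the same parity, so \<open>s\<^sub>k = (-1)\<^bsup>d(1,k)\<^esup>\<close> alternates along edges and
  spans \<open>ker M\<^sup>T\<close>; then \<open>J = s s\<^sup>T / n\<close> and \<open>s\<^sub>i s\<^sub>j = (-1)\<^bsup>d(i,j)\<^esup>\<close>.\<close>

lemma adj_sym: "adj E u v \<longleftrightarrow> adj E v u"
  unfolding adj_def by (auto simp: insert_commute)

lemma walk_Nil [simp]: "\<not> walk E []"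
  unfolding walk_def by simp

lemma walk_singleton [simp]: "walk E [x]"
  unfolding walk_def by simp

lemma walk_Cons_Cons [simp]: "walk E (x # y # xs) \<longleftrightarrow> adj E x y \<and> walk E (y # xs)"
  unfolding walk_def by (auto simp: less_Suc_eq_0_disj)

lemma walk_append_iff: "walk E (xs @ y # ys) \<longleftrightarrow> walk E (xs @ [y]) \<and> walk E (y # ys)"
  by (induction xs rule: induct_list012) auto

lemma walk_snoc: "xs \<noteq> [] \<Longrightarrow> walk E (xs @ [y]) \<longleftrightarrow> walk E xs \<and> adj E (last xs) y"
proof (induction xs rule: rev_nonempty_induct)
  case (snoc x xs)
  then show ?case using walk_append_iff[of E xs x "[y]"] by simp
qed simp

lemma walk_rev: "walk E xs \<Longrightarrow> walk E (rev xs)"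
proof (induction xs rule: induct_list012)
  case (3 x y zs)
  then show ?case using walk_snoc[of "rev (y # zs)" E x] by (simp add: adj_sym)
qed auto

text \<open>A walk \<open>xs\<close> has \<open>length xs - 1\<close> edges, so a closed walk of even length is a closed walk
  with an odd number of edges. At a repeated vertex it splits into two shorter closed walks,
  one of which is again odd.\<close>

lemma closed_walk_odd_imp_odd_cycle:
  assumes "walk E xs" "hd xs = last xs" "even (length xs)"
  shows "has_odd_cycle E"
  using assms
proof (induction "length xs" arbitrary: xs rule: less_induct)
  case less
  obtain vs z where xs: "xs = vs @ [z]"
    using less.prems(1) by (metis rev_exhaust walk_Nil)
  then have "vs \<noteq> []" and odd_vs: "odd (length vs)"
    using less.prems(3) by auto
  have z: "z = hd vs" "adj E (last vs) z" and walk_vs: "walk E vs"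
    using less.prems \<open>vs \<noteq> []\<close> walk_snoc[OF \<open>vs \<noteq> []\<close>] unfolding xs by auto
  show ?thesis
  proof (cases "distinct vs")
    case True
    have "length vs \<noteq> 1"
      using z by (auto simp: length_Suc_conv adj_def)
    then have "3 \<le> length vs"
      using odd_vs \<open>vs \<noteq> []\<close> by presburger
    then show ?thesis
      unfolding has_odd_cycle_def using True walk_vs z odd_vs by auto
  next
    case False
    then obtain as y bs cs where vs: "vs = as @ [y] @ bs @ [y] @ cs"
      using not_distinct_decomp by blast
    define short where "short = as @ y # cs @ [z]"
    define loop where "loop = y # bs @ [y]"
    have "xs = as @ y # ((bs @ [y]) @ cs @ [z])"
      unfolding xs vs by simp
    then have "walk E (as @ [y])" and "walk E (y # (bs @ [y]) @ cs @ [z])"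
      using less.prems(1) walk_append_iff[of E as y "(bs @ [y]) @ cs @ [z]"] by simp_all
    then have "walk E (as @ [y])" "walk E loop" "walk E (y # cs @ [z])"
      using walk_append_iff[of E "y # bs" y "cs @ [z]"] unfolding loop_def by auto
    then have "walk E short"
      unfolding short_def using walk_append_iff[of E as y "cs @ [z]"] by blast
    have "length short + length loop = length xs + 1"
      unfolding short_def loop_def xs vs by simp
    then have "even (length short) \<or> even (length loop)"
      using less.prems(3) by presburger
    moreover have "hd short = last short" "hd loop = last loop"
      using less.prems(2) unfolding short_def loop_def xs vs by (cases as; simp)+
    moreover have "length short < length xs" "length loop < length xs"
      unfolding short_def loop_def xs vs by simp_all
    ultimately show ?thesis
      using less.hyps \<open>walk E short\<close> \<open>walk E loop\<close> by blast
  qed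
qed

lemma walks_same_parity:
  assumes "\<not> has_odd_cycle E" "walk E xs" "walk E ys"
    and "hd xs = hd ys" "last xs = last ys"
  shows "even (length xs + length ys)"
proof (rule ccontr)
  assume odd: "odd (length xs + length ys)"
  obtain y xs' ys' where xs: "xs = y # xs'" and ys: "ys = y # ys'"
    using assms(2-4) by (cases xs; cases ys) auto
  define zs where "zs = rev xs' @ y # ys'"
  have "walk E zs"
    using walk_rev[OF assms(2)] assms(3) walk_append_iff[of E "rev xs'" y ys']
    unfolding zs_def xs ys by simp
  moreover have "hd zs = last zs"
    using assms(5) unfolding zs_def xs ys by (cases xs' rule: rev_cases) auto
  moreover have "length zs = length xs + length ys - 1"
    unfolding zs_def xs ys by simp
  ultimately show False
    using closed_walk_odd_imp_odd_cycle assms(1) odd unfolding xs ys by fastforce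
qed

lemma shortest_walk_exists:
  assumes "walk E xs"
  obtains ws where "walk E ws" "hd ws = hd xs" "last ws = last xs"
    "length ws = Suc (graph_dist E (hd xs) (last xs))"
proof -
  have "length xs = Suc (length xs - 1)"
    using assms by (cases xs) auto
  then have "\<exists>k ws. walk E ws \<and> hd ws = hd xs \<and> last ws = last xs \<and> length ws = Suc k"
    using assms by blast
  then have "\<exists>ws. walk E ws \<and> hd ws = hd xs \<and> last ws = last xs \<and>
      length ws = Suc (graph_dist E (hd xs) (last xs))"
    unfolding graph_dist_def by (rule LeastI_ex)
  then show ?thesis
    using that by blast
qed

lemma walk_length_parity_graph_dist:
  assumes "\<not> has_odd_cycle E" "walk E xs"
  shows "(-1 :: 'a :: ring_1) ^ (length xs - 1) = (-1) ^ graph_dist E (hd xs) (last xs)"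
proof -
  obtain ws where "walk E ws" "hd ws = hd xs" "last ws = last xs"
    "length ws = Suc (graph_dist E (hd xs) (last xs))"
    using shortest_walk_exists[OF assms(2)] .
  then have "even (length xs + Suc (graph_dist E (hd xs) (last xs)))"
    using walks_same_parity[OF assms] by metis
  moreover have "xs \<noteq> []"
    using assms(2) by auto
  ultimately show ?thesis
    by (auto simp: minus_one_power_iff)
qed

lemma alternating_along_walk:
  fixes f :: "nat \<Rightarrow> 'a :: ring_1"
  assumes "\<And>u v. adj E u v \<Longrightarrow> f u + f v = 0" "walk E xs"
  shows "f (last xs) = (-1) ^ (length xs - 1) * f (hd xs)"
  using assms(2)
proof (induction xs rule: induct_list012)
  case (3 x y zs)
  then have "f x + f y = 0"
    using assms(1) by simp
  then have "f y = - f x"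
    by (metis add.commute add_eq_0_iff2)
  moreover have "f (last (y # zs)) = (-1) ^ length zs * f y"
    using 3 by simp
  ultimately show ?case
    by simp
qed auto

lemma connected_shortest_walk:
  assumes "graph_connected n E" "u < n" "v < n"
  obtains ws where "walk E ws" "hd ws = u" "last ws = v"
    "length ws = Suc (graph_dist E u v)"
proof -
  obtain xs where "walk E xs" "hd xs = u" "last xs = v"
    using assms unfolding graph_connected_def by blast
  then show ?thesis
    using shortest_walk_exists that by blast
qed

lemma adj_less:
  assumes "simple_graph n E" "adj E u v"
  shows "u < n" "v < n"
proof -
  obtain a b where "{u, v} = {a, b}" "a < n" "b < n"
    using assms unfolding simple_graph_def adj_def by blast
  then show "u < n" "v < n"
    by (auto simp: doubleton_eq_iff)
qed

lemma alternating_graph_dist: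
  fixes f :: "nat \<Rightarrow> 'a :: ring_1"
  assumes "\<And>u v. adj E u v \<Longrightarrow> f u + f v = 0" "graph_connected n E" "u < n" "v < n"
  shows "f v = (-1) ^ graph_dist E u v * f u"
proof -
  obtain ws where ws: "walk E ws" "hd ws = u" "last ws = v" "length ws = Suc (graph_dist E u v)"
    using connected_shortest_walk[OF assms(2-4)] .
  then show ?thesis
    using alternating_along_walk[where f = f and E = E, OF assms(1) ws(1)] by simp
qed

lemma alternating_odd_cycle_eq_0:
  fixes f :: "nat \<Rightarrow> real"
  assumes alt: "\<And>u v. adj E u v \<Longrightarrow> f u + f v = 0"
    and "simple_graph n E" "graph_connected n E" "has_odd_cycle E" "k < n"
  shows "f k = 0"
proof -
  obtain vs where vs: "odd (length vs)" "walk E vs" "adj E (last vs) (hd vs)"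
    using assms(4) unfolding has_odd_cycle_def by blast
  have "vs \<noteq> []"
    using vs(2) by auto
  then have "walk E (vs @ [hd vs])"
    using walk_snoc vs(2,3) by blast
  then have "f (hd vs) = - f (hd vs)"
    using alternating_along_walk[where f = f and E = E, OF alt, of "vs @ [hd vs]"] vs(1) \<open>vs \<noteq> []\<close>
    by simp
  then have "f (hd vs) = 0"
    by simp
  moreover have "hd vs < n"
    using adj_less[OF assms(2) vs(3)] by simp
  ultimately show ?thesis
    using alternating_graph_dist[where f = f, OF alt assms(3) _ assms(5)] by simp
qed

lemma bipartite_sign_alternating:
  assumes "\<not> has_odd_cycle E" "simple_graph n E" "graph_connected n E" "w < n" "adj E u v"
  shows "(-1::real) ^ graph_dist E w u + (-1) ^ graph_dist E w v = 0"
proof -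
  obtain ws where ws: "walk E ws" "hd ws = w" "last ws = u" "length ws = Suc (graph_dist E w u)"
    using connected_shortest_walk[OF assms(3,4) adj_less(1)[OF assms(2,5)]] .
  moreover have "ws \<noteq> []"
    using ws(1) by auto
  ultimately have "walk E (ws @ [v])"
    using walk_snoc assms(5) by blast
  then have "(-1::real) ^ Suc (graph_dist E w u) = (-1) ^ graph_dist E w v"
    using walk_length_parity_graph_dist[OF assms(1), of "ws @ [v]"] ws \<open>ws \<noteq> []\<close> by simp
  then show ?thesis
    by simp
qed

lemma moore_penrose_inverse_unique:
  assumes X: "is_moore_penrose_inverse A X" and Y: "is_moore_penrose_inverse A Y"
  shows "X = Y"
proof -
  define n m where "n = dim_row A" and "m = dim_col A"
  have A: "A \<in> carrier_mat n m"
    unfolding n_def m_def by auto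
  have Xc: "X \<in> carrier_mat m n" and Yc: "Y \<in> carrier_mat m n"
    and XAX: "X * A * X = X" and YAY: "Y * A * Y = Y"
    and AXA: "A * X * A = A" and AYA: "A * Y * A = A"
    and AX: "transpose_mat (A * X) = A * X" and AY: "transpose_mat (A * Y) = A * Y"
    and XA: "transpose_mat (X * A) = X * A" and YA: "transpose_mat (Y * A) = Y * A"
    using X Y unfolding is_moore_penrose_inverse_def n_def m_def by auto
  have AXc: "A * X \<in> carrier_mat n n" and AYc: "A * Y \<in> carrier_mat n n"
    and XAc: "X * A \<in> carrier_mat m m" and YAc: "Y * A \<in> carrier_mat m m"
    using A Xc Yc by auto
  have "A * X = A * Y * A * X"
    using AYA by simp
  also have "\<dots> = transpose_mat (A * Y) * transpose_mat (A * X)"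
    using assoc_mult_mat[OF AYc A Xc] AX AY by simp
  also have "\<dots> = transpose_mat (A * X * A * Y)"
    using transpose_mult[OF AXc AYc] assoc_mult_mat[OF AXc A Yc] by simp
  also have "\<dots> = A * Y"
    using AXA AY by simp
  finally have AX_AY: "A * X = A * Y" .
  have "X * A = X * (A * Y * A)"
    using AYA by simp
  also have "\<dots> = transpose_mat (X * A) * transpose_mat (Y * A)"
    using assoc_mult_mat[OF Xc A YAc] assoc_mult_mat[OF A Yc A] XA YA by simp
  also have "\<dots> = transpose_mat (Y * (A * X * A))"
    using transpose_mult[OF YAc XAc] assoc_mult_mat[OF YAc Xc A, symmetric]
      assoc_mult_mat[OF Yc A Xc] assoc_mult_mat[OF Yc AXc A] by simp
  also have "\<dots> = Y * A"
    using AXA YA by simp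
  finally have XA_YA: "X * A = Y * A" .
  have "X = X * (A * X)"
    using XAX assoc_mult_mat[OF Xc A Xc] by simp
  also have "\<dots> = Y * A * Y"
    using AX_AY XA_YA assoc_mult_mat[OF Xc A Yc] by simp
  finally show ?thesis
    using YAY by simp
qed

lemma moore_penrose_inverse_eqI:
  "is_moore_penrose_inverse A X \<Longrightarrow> moore_penrose_inverse A = X"
  unfolding moore_penrose_inverse_def using moore_penrose_inverse_unique by blast

lemma transpose_kernel_gram:
  fixes M :: "real mat"
  assumes M: "M \<in> carrier_mat n m" and v: "v \<in> carrier_vec n"
    and gram: "(M * transpose_mat M) *\<^sub>v v = 0\<^sub>v n"
  shows "transpose_mat M *\<^sub>v v = 0\<^sub>v m"
proof -
  define w where "w = transpose_mat M *\<^sub>v v"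
  have w: "w \<in> carrier_vec m"
    using M v unfolding w_def by simp
  have "w \<bullet> w = v \<bullet> (M *\<^sub>v w)"
    using transpose_vec_mult_scalar[OF M w v] unfolding w_def by simp
  also have "M *\<^sub>v w = 0\<^sub>v n"
    using assoc_mult_mat_vec[OF M _ v, of "transpose_mat M"] M gram unfolding w_def by simp
  finally have "w \<bullet>c w = 0"
    using v by simp
  then show ?thesis
    using conjugate_square_eq_0_vec[OF w] unfolding w_def by simp
qed

lemma minus_zero_mat [simp]:
  "(A :: 'a :: group_add mat) \<in> carrier_mat nr nc \<Longrightarrow> A - 0\<^sub>m nr nc = A"
  by (intro eq_matI) auto

lemma is_moore_penrose_inverse_transpose_mult:
  fixes M J Y :: "real mat"
  assumes M: "M \<in> carrier_mat n m" and J: "J \<in> carrier_mat n n" and Y: "Y \<in> carrier_mat n n"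
    and J_sym: "transpose_mat J = J" and Y_sym: "transpose_mat Y = Y"
    and JM: "J * M = 0\<^sub>m n m" and YJ: "Y * J = J"
    and MMtY: "M * transpose_mat M * Y = 1\<^sub>m n - J"
  shows "is_moore_penrose_inverse M (transpose_mat M * Y)"
proof -
  define Mt where "Mt = transpose_mat M"
  have Mt: "Mt \<in> carrier_mat m n"
    using M unfolding Mt_def by simp
  have MX: "M * (Mt * Y) = 1\<^sub>m n - J"
    using MMtY assoc_mult_mat[OF M Mt Y] unfolding Mt_def by simp
  have MtJ: "Mt * J = 0\<^sub>m m n"
    using transpose_mult[OF J M] JM J_sym unfolding Mt_def by simp
  have "M * (Mt * Y) * M = M - J * M"
    using MX M J by (simp add: minus_mult_distrib_mat[OF one_carrier_mat J M])
  moreover have "Mt * Y * M * (Mt * Y) = Mt * Y - Mt * J"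
  proof -
    have "Mt * Y * M * (Mt * Y) = Mt * (Y * (1\<^sub>m n - J))"
      using assoc_mult_mat[OF mult_carrier_mat[OF Mt Y] M mult_carrier_mat[OF Mt Y]] MX
        assoc_mult_mat[OF Mt Y minus_carrier_mat[OF J]] by simp
    also have "\<dots> = Mt * (Y - J)"
      using mult_minus_distrib_mat[OF Y one_carrier_mat J] YJ Y by simp
    finally show ?thesis
      using mult_minus_distrib_mat[OF Mt Y J] by simp
  qed
  moreover have "transpose_mat (1\<^sub>m n - J) = 1\<^sub>m n - J"
    using transpose_minus[OF one_carrier_mat J] J_sym by simp
  moreover have "transpose_mat (Mt * Y * M) = Mt * Y * M"
    using transpose_mult[OF mult_carrier_mat[OF Mt Y] M] transpose_mult[OF Mt Y] Y_sym
      assoc_mult_mat[OF Mt Y M] unfolding Mt_def by simp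
  ultimately show ?thesis
    unfolding is_moore_penrose_inverse_def Mt_def[symmetric] using MX JM MtJ M Mt Y by simp
qed

lemma mult_gram_plus_idem:
  fixes M J :: "real mat"
  assumes M: "M \<in> carrier_mat n m" and J: "J \<in> carrier_mat n n"
    and JM: "J * M = 0\<^sub>m n m" and J_idem: "J * J = J"
  shows "J * (M * transpose_mat M + J) = J"
proof -
  have "J * (M * transpose_mat M) = 0\<^sub>m n n"
    using assoc_mult_mat[OF J M, of "transpose_mat M" n] JM M by simp
  moreover have "M * transpose_mat M \<in> carrier_mat n n"
    using M by simp
  ultimately show ?thesis
    using mult_add_distrib_mat[OF J _ J, of "M * transpose_mat M"] J J_idem by simp
qed

lemma det_gram_plus_kernel_projection_nonzero:
  fixes M J :: "real mat"
  assumes M: "M \<in> carrier_mat n m" and J: "J \<in> carrier_mat n n"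
    and JM: "J * M = 0\<^sub>m n m" and J_idem: "J * J = J"
    and kernel: "\<And>x. x \<in> carrier_vec n \<Longrightarrow> transpose_mat M *\<^sub>v x = 0\<^sub>v m \<Longrightarrow> J *\<^sub>v x = x"
  shows "det (M * transpose_mat M + J) \<noteq> 0"
proof
  define G where "G = M * transpose_mat M"
  have G: "G \<in> carrier_mat n n" and GJ: "G + J \<in> carrier_mat n n"
    using M J unfolding G_def by auto
  have J_GJ: "J * (G + J) = J"
    using mult_gram_plus_idem[OF M J JM J_idem] unfolding G_def .
  assume "det (M * transpose_mat M + J) = 0"
  then obtain v where v: "v \<in> carrier_vec n" "v \<noteq> 0\<^sub>v n" and GJv: "(G + J) *\<^sub>v v = 0\<^sub>v n"
    using det_0_iff_vec_prod_zero_field[OF GJ] unfolding G_def by blast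
  have "J *\<^sub>v v = J *\<^sub>v ((G + J) *\<^sub>v v)"
    using assoc_mult_mat_vec[OF J GJ v(1)] J_GJ by simp
  also have "\<dots> = 0\<^sub>v n"
    using GJv J by (intro eq_vecI) auto
  finally have Jv: "J *\<^sub>v v = 0\<^sub>v n" .
  then have "G *\<^sub>v v = 0\<^sub>v n"
    using GJv G J v by (simp add: add_mult_distrib_mat_vec)
  then have "transpose_mat M *\<^sub>v v = 0\<^sub>v m"
    using transpose_kernel_gram[OF M v(1)] unfolding G_def by simp
  then show False
    using kernel[OF v(1)] Jv v(2) by simp
qed

lemma mult_moore_penrose_inverse_eq:
  fixes M J :: "real mat"
  assumes M: "M \<in> carrier_mat n m" and J: "J \<in> carrier_mat n n"
    and J_sym: "transpose_mat J = J" and J_idem: "J * J = J" and JM: "J * M = 0\<^sub>m n m"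
    and kernel: "\<And>x. x \<in> carrier_vec n \<Longrightarrow> transpose_mat M *\<^sub>v x = 0\<^sub>v m \<Longrightarrow> J *\<^sub>v x = x"
  shows "M * moore_penrose_inverse M = 1\<^sub>m n - J"
proof -
  define G where "G = M * transpose_mat M"
  have G: "G \<in> carrier_mat n n" and GJ: "G + J \<in> carrier_mat n n"
    using M J unfolding G_def by auto
  have J_GJ: "J * (G + J) = J"
    using mult_gram_plus_idem[OF M J JM J_idem] unfolding G_def .
  have GJ_sym: "transpose_mat (G + J) = G + J"
    using transpose_add[OF G J] transpose_mult[OF M, of "transpose_mat M" n] J_sym M
    unfolding G_def by simp
  obtain Y where Y: "Y \<in> carrier_mat n n" and GJ_Y: "(G + J) * Y = 1\<^sub>m n"
    using det_non_zero_imp_unit[OF GJ]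
      det_gram_plus_kernel_projection_nonzero[OF M J JM J_idem kernel]
    unfolding G_def Units_def ring_mat_def by auto
  have "transpose_mat Y * (G + J) = 1\<^sub>m n"
    using transpose_mult[OF GJ Y] GJ_Y GJ_sym by simp
  then have Y_sym: "transpose_mat Y = Y"
    using assoc_mult_mat[OF _ GJ Y, of "transpose_mat Y" n] GJ_Y Y by simp
  have JY: "J * Y = J"
    using assoc_mult_mat[OF J GJ Y] GJ_Y J_GJ J by simp
  have YJ: "Y * J = J"
    using transpose_mult[OF J Y] JY Y_sym J_sym by simp
  have "G * Y = (G * Y + J) - J"
    using G J Y by (intro eq_matI) auto
  also have "\<dots> = 1\<^sub>m n - J"
    using GJ_Y JY G J Y by (simp add: add_mult_distrib_mat)
  finally have GY: "G * Y = 1\<^sub>m n - J" .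
  have "is_moore_penrose_inverse M (transpose_mat M * Y)"
    using is_moore_penrose_inverse_transpose_mult[OF M J Y J_sym Y_sym JM YJ] GY
    unfolding G_def by simp
  then show ?thesis
    using moore_penrose_inverse_eqI assoc_mult_mat[OF M _ Y, of "transpose_mat M"] M GY
    unfolding G_def by simp
qed

lemma dim_incidence_matrix [simp]:
  "dim_row (incidence_matrix n E) = n" "dim_col (incidence_matrix n E) = length E"
  unfolding incidence_matrix_def by simp_all

lemma scalar_prod_incidence_col:
  assumes "j < length E" "E ! j = {u, v}" "u \<noteq> v" "u < n" "v < n" "x \<in> carrier_vec n"
  shows "col (incidence_matrix n E) j \<bullet> x = x $ u + x $ v"
proof -
  have "col (incidence_matrix n E) j \<bullet> x = (\<Sum>k = 0..<n. if k \<in> {u, v} then x $ k else 0)"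
    using assms unfolding incidence_matrix_def scalar_prod_def by (auto intro: sum.cong)
  also have "\<dots> = (\<Sum>k \<in> {0..<n} \<inter> {u, v}. x $ k)"
    by (simp add: sum.inter_restrict)
  also have "{0..<n} \<inter> {u, v} = {u, v}"
    using assms by auto
  finally show ?thesis
    using assms(3) by simp
qed

lemma incidence_transpose_kernel_alternating:
  assumes "simple_graph n E" "x \<in> carrier_vec n"
    and "transpose_mat (incidence_matrix n E) *\<^sub>v x = 0\<^sub>v (length E)" "adj E u v"
  shows "x $ u + x $ v = 0"
proof -
  obtain j where j: "j < length E" "E ! j = {u, v}"
    using assms(4) unfolding adj_def by (auto simp: in_set_conv_nth)
  have "col (incidence_matrix n E) j \<bullet> x = (transpose_mat (incidence_matrix n E) *\<^sub>v x) $ j"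
    using j(1) by (simp add: incidence_matrix_def)
  also have "\<dots> = 0"
    using assms(3) j(1) by simp
  finally have "col (incidence_matrix n E) j \<bullet> x = 0" .
  then show ?thesis
    using scalar_prod_incidence_col[OF j _ adj_less[OF assms(1,4)] assms(2)] assms(4)
    by (simp add: adj_def)
qed

definition sign_projection :: "nat \<Rightarrow> (nat \<Rightarrow> real) \<Rightarrow> real mat" where
  "sign_projection n s = mat n n (\<lambda>(i, j). s i * s j / real n)"

lemma index_sign_projection [simp]:
  "i < n \<Longrightarrow> j < n \<Longrightarrow> sign_projection n s $$ (i, j) = s i * s j / real n"
  "dim_row (sign_projection n s) = n" "dim_col (sign_projection n s) = n"
  unfolding sign_projection_def by simp_all

lemma transpose_sign_projection: "transpose_mat (sign_projection n s) = sign_projection n s"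
  by (intro eq_matI) auto

lemma sign_projection_idem:
  assumes "\<And>k. k < n \<Longrightarrow> s k * s k = 1"
  shows "sign_projection n s * sign_projection n s = sign_projection n s"
proof (intro eq_matI)
  fix i j assume "i < dim_row (sign_projection n s)" "j < dim_col (sign_projection n s)"
  then have ij: "i < n" "j < n"
    by simp_all
  have "(sign_projection n s * sign_projection n s) $$ (i, j) =
      (\<Sum>k = 0..<n. s i * s j * (s k * s k) / (real n * real n))"
    using ij by (auto simp: scalar_prod_def intro!: sum.cong)
  also have "\<dots> = s i * s j / real n"
    using assms ij by simp
  finally show "(sign_projection n s * sign_projection n s) $$ (i, j) = sign_projection n s $$ (i, j)"
    using ij by simp
qed simp_all

lemma sign_projection_mult_vec:
  assumes "\<And>k. k < n \<Longrightarrow> s k * s k = 1"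
    and "x \<in> carrier_vec n" "\<And>k. k < n \<Longrightarrow> x $ k = s k * c"
  shows "sign_projection n s *\<^sub>v x = x"
proof (intro eq_vecI)
  fix i assume "i < dim_vec x"
  then have i: "i < n"
    using assms(2) by simp
  have "(sign_projection n s *\<^sub>v x) $ i = (\<Sum>k = 0..<n. s i * (s k * s k) * c / real n)"
    using i assms(2,3) by (auto simp: scalar_prod_def intro!: sum.cong)
  also have "\<dots> = s i * c"
    using assms(1) i by simp
  finally show "(sign_projection n s *\<^sub>v x) $ i = x $ i"
    using assms(3) i by simp
qed (use assms(2) in simp)

lemma sign_projection_mult_incidence:
  assumes "simple_graph n E" "\<And>u v. adj E u v \<Longrightarrow> s u + s v = 0"
  shows "sign_projection n s * incidence_matrix n E = 0\<^sub>m n (length E)"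
proof (intro eq_matI)
  fix i j assume "i < dim_row (0\<^sub>m n (length E))" "j < dim_col (0\<^sub>m n (length E))"
  then have i: "i < n" and j: "j < length E"
    by auto
  then have "E ! j \<in> set E"
    by simp
  then obtain u v where uv: "E ! j = {u, v}" "u \<noteq> v" "u < n" "v < n"
    using assms(1) unfolding simple_graph_def by blast
  have "adj E u v"
    using uv \<open>E ! j \<in> set E\<close> unfolding adj_def by simp
  have row_P: "row (sign_projection n s) i \<in> carrier_vec n"
    and col_M: "col (incidence_matrix n E) j \<in> carrier_vec n"
    using i by (auto intro: carrier_vecI)
  have "(sign_projection n s * incidence_matrix n E) $$ (i, j) =
      col (incidence_matrix n E) j \<bullet> row (sign_projection n s) i"
    using i j comm_scalar_prod[OF row_P col_M] by simp
  also have "\<dots> = s i * s u / real n + s i * s v / real n"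
    using scalar_prod_incidence_col[OF j uv row_P] i uv by simp
  also have "\<dots> = s i * (s u + s v) / real n"
    by (simp add: distrib_left add_divide_distrib)
  finally show "(sign_projection n s * incidence_matrix n E) $$ (i, j) = 0\<^sub>m n (length E) $$ (i, j)"
    using assms(2)[OF \<open>adj E u v\<close>] i j by simp
qed simp_all

lemma incidence_mult_pinv_odd_cycle:
  assumes "simple_graph n E" "graph_connected n E" "has_odd_cycle E"
  shows "incidence_matrix n E * moore_penrose_inverse (incidence_matrix n E) = 1\<^sub>m n"
proof -
  have "incidence_matrix n E * moore_penrose_inverse (incidence_matrix n E) = 1\<^sub>m n - 0\<^sub>m n n"
  proof (rule mult_moore_penrose_inverse_eq[where m = "length E"])
    fix x assume x: "x \<in> carrier_vec n"
      "transpose_mat (incidence_matrix n E) *\<^sub>v x = 0\<^sub>v (length E)"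
    have "x $ k = 0" if "k < n" for k
      using alternating_odd_cycle_eq_0[where f = "\<lambda>k. x $ k", OF
          incidence_transpose_kernel_alternating[OF assms(1) x] assms that] .
    then show "0\<^sub>m n n *\<^sub>v x = x"
      using x(1) by (intro eq_vecI) auto
  qed (simp_all add: carrier_matI)
  then show ?thesis
    by simp
qed

lemma incidence_mult_pinv_alternating_sign:
  fixes s :: "nat \<Rightarrow> real"
  assumes "simple_graph n E" "graph_connected n E"
    and s_sq: "\<And>k. s k * s k = 1" and s_alt: "\<And>u v. adj E u v \<Longrightarrow> s u + s v = 0"
  shows "incidence_matrix n E * moore_penrose_inverse (incidence_matrix n E) =
    1\<^sub>m n - sign_projection n s"
proof (rule mult_moore_penrose_inverse_eq[where m = "length E"])
  show "sign_projection n s * sign_projection n s = sign_projection n s"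
    by (rule sign_projection_idem) (rule s_sq)
  show "sign_projection n s * incidence_matrix n E = 0\<^sub>m n (length E)"
    using sign_projection_mult_incidence[where s = s, OF assms(1) s_alt] .
  fix x assume x: "x \<in> carrier_vec n" "transpose_mat (incidence_matrix n E) *\<^sub>v x = 0\<^sub>v (length E)"
  have x_sign: "x $ k = s k * (s 0 * x $ 0)" if "k < n" for k
  proof -
    have "0 < n"
      using that by simp
    have "s k = (-1) ^ graph_dist E 0 k * s 0"
      using alternating_graph_dist[where f = s, OF s_alt assms(2) \<open>0 < n\<close> that] .
    then have "s k * (s 0 * x $ 0) = (-1) ^ graph_dist E 0 k * (s 0 * s 0) * x $ 0"
      by (simp add: mult_ac)
    also have "\<dots> = x $ k"
      using alternating_graph_dist[where f = "\<lambda>k. x $ k", OF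
          incidence_transpose_kernel_alternating[OF assms(1) x] assms(2) \<open>0 < n\<close> that] s_sq[of 0]
      by simp
    finally show ?thesis ..
  qed
  show "sign_projection n s *\<^sub>v x = x"
    by (rule sign_projection_mult_vec[where s = s, OF _ x(1) x_sign]) (rule s_sq)
qed (simp_all add: carrier_matI transpose_sign_projection)

lemma sign_projection_graph_dist:
  fixes s :: "nat \<Rightarrow> real"
  assumes "graph_connected n E"
    and s_sq: "\<And>k. s k * s k = 1" and s_alt: "\<And>u v. adj E u v \<Longrightarrow> s u + s v = 0"
  shows "sign_projection n s = (1 / real n) \<cdot>\<^sub>m mat n n (\<lambda>(i, j). (-1) ^ graph_dist E i j)"
proof (rule eq_matI)
  fix i j assume "i < dim_row ((1 / real n) \<cdot>\<^sub>m mat n n (\<lambda>(i, j). (-1) ^ graph_dist E i j))"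
    "j < dim_col ((1 / real n) \<cdot>\<^sub>m mat n n (\<lambda>(i, j). (-1) ^ graph_dist E i j))"
  then have ij: "i < n" "j < n"
    by simp_all
  have "s j = (-1) ^ graph_dist E i j * s i"
    using alternating_graph_dist[where f = s, OF s_alt assms(1) ij] .
  then have "s i * s j = (-1) ^ graph_dist E i j"
    using s_sq[of i] by (simp add: mult.left_commute)
  then show "sign_projection n s $$ (i, j) =
      ((1 / real n) \<cdot>\<^sub>m mat n n (\<lambda>(i, j). (-1) ^ graph_dist E i j)) $$ (i, j)"
    using ij by simp
qed simp_all

theorem mainTheorem7:
  fixes n :: nat and E :: "nat set list"
  assumes "simple_graph n E" and "graph_connected n E"
  defines "M \<equiv> incidence_matrix n E"
  shows "(has_odd_cycle E \<longrightarrow> M * moore_penrose_inverse M = 1\<^sub>m n) \<and>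
         (\<not> has_odd_cycle E \<longrightarrow> M * moore_penrose_inverse M =
            1\<^sub>m n - (1 / real n) \<cdot>\<^sub>m mat n n (\<lambda>(i, j). (-1) ^ graph_dist E i j))"
proof (intro conjI impI)
  assume "has_odd_cycle E"
  then show "M * moore_penrose_inverse M = 1\<^sub>m n"
    using incidence_mult_pinv_odd_cycle assms(1,2) unfolding M_def by blast
next
  assume bipartite: "\<not> has_odd_cycle E"
  define s :: "nat \<Rightarrow> real" where "s k = (-1) ^ graph_dist E 0 k" for k
  have s_sq: "s k * s k = 1" for k
    unfolding s_def by (simp flip: power_add)
  have s_alt: "s u + s v = 0" if "adj E u v" for u v
    using bipartite_sign_alternating[OF bipartite assms(1,2) _ that] adj_less[OF assms(1) that]
    unfolding s_def by simp
  show "M * moore_penrose_inverse M =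
      1\<^sub>m n - (1 / real n) \<cdot>\<^sub>m mat n n (\<lambda>(i, j). (-1) ^ graph_dist E i j)"
    using incidence_mult_pinv_alternating_sign[OF assms(1,2) s_sq s_alt]
      sign_projection_graph_dist[OF assms(2) s_sq s_alt]
    unfolding M_def by simp
qed

end
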